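(* Let $n\ge2$, $\omega\in\mathbb{R}^n$ and $k\in\mathbb{R}_{>0}^n$ satisfy (IC1) $\sum_{\mu=1}^n\omega_\mu=0$, (IC2) $\omega\neq0$, and (IC3) $\left|\frac{\omega_1}{k_1}\right|\le\cdots\le\left|\frac{\omega_n}{k_n}\right|$. Then there are at most $2^n-2$ equilibria, i.e. at most $2^n-2$ points $\theta\in(-\pi,\pi]^n$ satisfying $$\omega_\nu=\frac1n\sum_{\mu=1}^n k_\nu k_\mu\sin(\theta_\nu-\theta_\mu)\quad(\nu=1,\ldots,n)\qquad\text{and}\qquad \sum_{\mu=1}^n k_\mu e^{i\theta_\mu}\in\mathbb{R}_{\ge0}.$$
   Context: The condition $\sum_\mu k_\mu e^{i\theta_\mu}\in\mathbb{R}_{\ge0}$ normalizes equilibria modulo a common shift of all angles (equilibria are counted modulo shift). *)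

theory Defs
  imports "HOL-Analysis.Analysis"
begin

text \<open>Points of (-pi,pi]^n are represented as functions theta :: nat => real,
  with components theta 1, ..., theta n, and theta mu = 0 for mu outside {1..n}
  (so that distinct points of (-pi,pi]^n correspond to distinct functions).\<close>

definition equilibria :: "nat \<Rightarrow> (nat \<Rightarrow> real) \<Rightarrow> (nat \<Rightarrow> real) \<Rightarrow> (nat \<Rightarrow> real) set" where
  "equilibria n \<omega> k = {\<theta>.
     (\<forall>\<mu>\<in>{1..n}. -pi < \<theta> \<mu> \<and> \<theta> \<mu> \<le> pi) \<and>
     (\<forall>\<mu>. \<mu> \<notin> {1..n} \<longrightarrow> \<theta> \<mu> = 0) \<and>
     (\<forall>\<nu>\<in>{1..n}. \<omega> \<nu> = (1 / real n) * (\<Sum>\<mu>=1..n. k \<nu> * k \<mu> * sin (\<theta> \<nu> - \<theta> \<mu>))) \<and>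
     (\<exists>r::real. r \<ge> 0 \<and> (\<Sum>\<mu>=1..n. complex_of_real (k \<mu>) * exp (\<i> * complex_of_real (\<theta> \<mu>))) = complex_of_real r)}"

end

theory Submission
  imports Defs "HOL-Library.Function_Algebras"
begin

text \<open>At an equilibrium the order parameter \<open>R = \<Sum>\<^sub>\<mu> k\<^sub>\<mu> exp (\<i> \<theta>\<^sub>\<mu>)\<close> is real and
  nonnegative, so the equilibrium equations read \<open>b\<^sub>\<nu> = R sin \<theta>\<^sub>\<nu>\<close> with
  \<open>b\<^sub>\<nu> = n \<omega>\<^sub>\<nu> / k\<^sub>\<nu>\<close>. The point \<open>y\<^sub>\<nu> = R cos \<theta>\<^sub>\<nu>\<close> then determines \<open>\<theta>\<close> and solves the
  \<open>n\<close> quadrics \<open>y\<^sub>\<mu>\<^sup>2 + b\<^sub>\<mu>\<^sup>2 = \<Sum>\<^sub>\<nu> k\<^sub>\<nu> y\<^sub>\<nu>\<close>. On that variety every polynomial with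
  real coefficients reduces to a real combination of the \<open>2\<^sup>n\<close> squarefree monomials. By
  (IC1), \<open>\<Sum>\<^sub>\<nu> k\<^sub>\<nu> b\<^sub>\<nu> = 0\<close>, so the non-real point \<open>\<i> b\<close> lies on the variety too. Products
  of affine forms realise arbitrary real values at the real solutions together with an
  arbitrary complex value at \<open>\<i> b\<close>, which costs two more real dimensions; hence there are at
  most \<open>2\<^sup>n - 2\<close> real solutions. The ordering (IC3) is only a labelling convention and is not
  needed.\<close>

lemma sum_fun_apply: "finite A \<Longrightarrow> sum f A x = (\<Sum>a\<in>A. f a x)"
  by (induction A rule: finite_induct) auto

lemma card_le_if_indicators_in_span:
  fixes W :: "'s \<Rightarrow> 'a \<Rightarrow> real" and D :: "'a set" and M :: "'s set"
  assumes M: "finite M" and D: "finite D"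
    and indicators: "\<forall>x\<in>D. \<exists>c. \<forall>x'\<in>D. (\<Sum>S\<in>M. c S * W S x') = (if x' = x then 1 else 0)"
  shows "card D \<le> card M"
proof -
  interpret v: vector_space "\<lambda>(r::real) (f::'a \<Rightarrow> real) x. r * f x"
    by unfold_locales (auto simp: fun_eq_iff algebra_simps)
  define \<delta> where "\<delta> = (\<lambda>x::'a. \<lambda>x'. if x' = x then (1::real) else 0)"
  define W' where "W' = (\<lambda>S x. if x \<in> D then W S x else 0)"
  have spanned: "\<delta> ` D \<subseteq> v.span (W' ` M)"
  proof
    fix v assume "v \<in> \<delta> ` D"
    then obtain x where x: "x \<in> D" "v = \<delta> x" by auto
    with indicators obtain c
      where c: "\<forall>x'\<in>D. (\<Sum>S\<in>M. c S * W S x') = (if x' = x then 1 else 0)" by blast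
    have "(\<Sum>S\<in>M. c S * W' S x') = v x'" for x'
      using c x by (cases "x' \<in> D") (auto simp: \<delta>_def W'_def)
    then have "(\<Sum>S\<in>M. (\<lambda>x'. c S * W' S x')) = v"
      using M by (simp add: fun_eq_iff sum_fun_apply)
    moreover have "(\<Sum>S\<in>M. (\<lambda>x'. c S * W' S x')) \<in> v.span (W' ` M)"
      by (intro v.span_sum v.span_scale v.span_base) auto
    ultimately show "v \<in> v.span (W' ` M)" by simp
  qed
  have "v.independent (\<delta> ` D)"
  proof
    assume "v.dependent (\<delta> ` D)"
    then obtain t u where t: "finite t" "t \<subseteq> \<delta> ` D"
      and zero: "(\<Sum>v\<in>t. (\<lambda>x. u v * v x)) = 0" and "\<exists>v\<in>t. u v \<noteq> 0"
      unfolding v.dependent_explicit by blast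
    then obtain x where x: "\<delta> x \<in> t" "u (\<delta> x) \<noteq> 0" by blast
    have "0 = (\<Sum>v\<in>t. u v * v x)"
      using fun_cong[OF zero, of x] t(1) by (simp add: sum_fun_apply)
    also have "\<dots> = (\<Sum>v\<in>t. if v = \<delta> x then u (\<delta> x) else 0)"
    proof (rule sum.cong)
      fix v assume "v \<in> t"
      then obtain y where "v = \<delta> y" using t(2) by auto
      then show "u v * v x = (if v = \<delta> x then u (\<delta> x) else 0)"
        by (cases "y = x") (auto simp: \<delta>_def dest: fun_cong[where x = y])
    qed simp
    also have "\<dots> = u (\<delta> x)" using x t(1) by simp
    finally show False using x by simp
  qed
  then have "card (\<delta> ` D) \<le> card (W' ` M)"
    using v.independent_span_bound[OF _ _ spanned] M by auto
  also have "\<dots> \<le> card M" by (rule card_image_le[OF M])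
  finally have "card (\<delta> ` D) \<le> card M" .
  moreover have "inj_on \<delta> D"
    by (auto simp: inj_on_def \<delta>_def fun_eq_iff split: if_splits)
  ultimately show ?thesis by (simp add: card_image)
qed

definition quadric_variety :: "nat \<Rightarrow> (nat \<Rightarrow> real) \<Rightarrow> (nat \<Rightarrow> real) \<Rightarrow> (nat \<Rightarrow> complex) set" where
  "quadric_variety n k b =
     {z. \<forall>\<mu>\<in>{1..n}. (z \<mu>)\<^sup>2 + complex_of_real ((b \<mu>)\<^sup>2) = (\<Sum>\<nu>=1..n. complex_of_real (k \<nu>) * z \<nu>)}"

definition monomial_span :: "nat \<Rightarrow> (nat \<Rightarrow> real) \<Rightarrow> (nat \<Rightarrow> real) \<Rightarrow> ((nat \<Rightarrow> complex) \<Rightarrow> complex) set" where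
  "monomial_span n k b = {g. \<exists>c. \<forall>z\<in>quadric_variety n k b.
     g z = (\<Sum>S\<in>Pow {1..n}. complex_of_real (c S) * prod z S)}"

definition affine_form :: "nat \<Rightarrow> real \<Rightarrow> (nat \<Rightarrow> real) \<Rightarrow> (nat \<Rightarrow> complex) \<Rightarrow> complex" where
  "affine_form n a \<alpha> z = complex_of_real a + (\<Sum>j=1..n. complex_of_real (\<alpha> j) * z j)"

lemma monomial_span_cong:
  "g \<in> monomial_span n k b \<Longrightarrow> (\<And>z. z \<in> quadric_variety n k b \<Longrightarrow> g z = h z)
    \<Longrightarrow> h \<in> monomial_span n k b"
  unfolding monomial_span_def by auto

lemma monomial_in_monomial_span: "S \<subseteq> {1..n} \<Longrightarrow> (\<lambda>z. prod z S) \<in> monomial_span n k b"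
  unfolding monomial_span_def
  by (intro CollectI exI[of _ "\<lambda>T. if T = S then 1 else 0"])
    (simp add: if_distrib if_distribR cong: if_cong)

lemma monomial_span_scale:
  assumes "g \<in> monomial_span n k b"
  shows "(\<lambda>z. complex_of_real a * g z) \<in> monomial_span n k b"
proof -
  obtain c where "\<forall>z\<in>quadric_variety n k b. g z = (\<Sum>S\<in>Pow {1..n}. complex_of_real (c S) * prod z S)"
    using assms unfolding monomial_span_def by blast
  then show ?thesis
    unfolding monomial_span_def
    by (intro CollectI exI[of _ "\<lambda>S. a * c S"]) (simp add: sum_distrib_left mult.assoc)
qed

lemma monomial_span_const: "(\<lambda>z. complex_of_real a) \<in> monomial_span n k b"
  using monomial_span_scale[OF monomial_in_monomial_span[of "{}"], of n a k b] by simp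

lemma monomial_span_add:
  assumes "g \<in> monomial_span n k b" "h \<in> monomial_span n k b"
  shows "(\<lambda>z. g z + h z) \<in> monomial_span n k b"
proof -
  obtain c d
    where "\<forall>z\<in>quadric_variety n k b. g z = (\<Sum>S\<in>Pow {1..n}. complex_of_real (c S) * prod z S)"
      and "\<forall>z\<in>quadric_variety n k b. h z = (\<Sum>S\<in>Pow {1..n}. complex_of_real (d S) * prod z S)"
    using assms unfolding monomial_span_def by blast
  then show ?thesis
    unfolding monomial_span_def
    by (intro CollectI exI[of _ "\<lambda>S. c S + d S"]) (simp add: sum.distrib distrib_right)
qed

lemma monomial_span_sum:
  "finite A \<Longrightarrow> (\<And>i. i \<in> A \<Longrightarrow> g i \<in> monomial_span n k b)
    \<Longrightarrow> (\<lambda>z. \<Sum>i\<in>A. g i z) \<in> monomial_span n k b"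
  by (induction A rule: finite_induct)
    (auto intro: monomial_span_add monomial_span_const[of 0, simplified])

text \<open>On the variety \<open>z\<^sub>j\<^sup>2 = \<Sum>\<^sub>\<nu> k\<^sub>\<nu> z\<^sub>\<nu> - b\<^sub>j\<^sup>2\<close>, which trades the square for products of
  coordinates with the smaller monomial \<open>z\<^bsup>S - {j}\<^esup>\<close>.\<close>
lemma coordinate_mult_monomial_in_monomial_span:
  assumes "j \<in> {1..n}" "S \<subseteq> {1..n}"
  shows "(\<lambda>z. z j * prod z S) \<in> monomial_span n k b"
  using assms
proof (induction "card S" arbitrary: S j rule: less_induct)
  case less
  have "finite S" using less.prems(2) finite_subset by blast
  show ?case
  proof (cases "j \<in> S")
    case False
    show ?thesis
      by (rule monomial_span_cong[OF monomial_in_monomial_span[of "insert j S"]])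
        (use less.prems False \<open>finite S\<close> in auto)
  next
    case True
    have smaller: "card (S - {j}) < card S"
      using True \<open>finite S\<close> by (meson card_Diff1_less)
    have "(\<lambda>z. (\<Sum>\<nu>=1..n. complex_of_real (k \<nu>) * (z \<nu> * prod z (S - {j})))
              + complex_of_real (- (b j)\<^sup>2) * prod z (S - {j})) \<in> monomial_span n k b"
      using less.prems
      by (intro monomial_span_add monomial_span_sum monomial_span_scale
          less.hyps[OF smaller] monomial_in_monomial_span) auto
    then show ?thesis
    proof (rule monomial_span_cong)
      fix z assume z: "z \<in> quadric_variety n k b"
      have square: "z j * z j = (\<Sum>\<nu>=1..n. complex_of_real (k \<nu>) * z \<nu>) - complex_of_real ((b j)\<^sup>2)"
        using z less.prems(1) unfolding quadric_variety_def power2_eq_square eq_diff_eq by blast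
      have "z j * prod z S = (z j * z j) * prod z (S - {j})"
        using True \<open>finite S\<close> by (simp add: prod.remove mult.assoc)
      also have "\<dots> = (\<Sum>\<nu>=1..n. complex_of_real (k \<nu>) * (z \<nu> * prod z (S - {j})))
              + complex_of_real (- (b j)\<^sup>2) * prod z (S - {j})"
        unfolding square by (simp add: left_diff_distrib sum_distrib_right mult.assoc)
      finally show "(\<Sum>\<nu>=1..n. complex_of_real (k \<nu>) * (z \<nu> * prod z (S - {j})))
              + complex_of_real (- (b j)\<^sup>2) * prod z (S - {j}) = z j * prod z S" ..
    qed
  qed
qed

lemma monomial_span_mult_coordinate:
  assumes "g \<in> monomial_span n k b" "j \<in> {1..n}"
  shows "(\<lambda>z. z j * g z) \<in> monomial_span n k b"
proof -
  obtain c where c: "\<forall>z\<in>quadric_variety n k b. g z = (\<Sum>S\<in>Pow {1..n}. complex_of_real (c S) * prod z S)"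
    using assms(1) unfolding monomial_span_def by blast
  have "(\<lambda>z. \<Sum>S\<in>Pow {1..n}. complex_of_real (c S) * (z j * prod z S)) \<in> monomial_span n k b"
    by (intro monomial_span_sum monomial_span_scale coordinate_mult_monomial_in_monomial_span assms(2)) auto
  then show ?thesis
    by (rule monomial_span_cong) (simp add: c sum_distrib_left algebra_simps)
qed

lemma monomial_span_mult_affine_form:
  assumes "g \<in> monomial_span n k b"
  shows "(\<lambda>z. affine_form n a \<alpha> z * g z) \<in> monomial_span n k b"
proof -
  have "(\<lambda>z. complex_of_real a * g z + (\<Sum>j=1..n. complex_of_real (\<alpha> j) * (z j * g z)))
      \<in> monomial_span n k b"
    by (intro monomial_span_add monomial_span_scale monomial_span_sum
        monomial_span_mult_coordinate assms) auto
  then show ?thesis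
    by (rule monomial_span_cong) (simp add: affine_form_def algebra_simps sum_distrib_left sum_distrib_right)
qed

lemma affine_form_in_monomial_span: "affine_form n a \<alpha> \<in> monomial_span n k b"
  using monomial_span_mult_affine_form[OF monomial_span_const[of 1]] by simp

lemma monomial_span_mult_prod_affine_forms:
  "finite A \<Longrightarrow> (\<And>q. q \<in> A \<Longrightarrow> \<exists>a \<alpha>. f q = affine_form n a \<alpha>) \<Longrightarrow> g \<in> monomial_span n k b
    \<Longrightarrow> (\<lambda>z. (\<Prod>q\<in>A. f q z) * g z) \<in> monomial_span n k b"
proof (induction A rule: finite_induct)
  case (insert q A)
  then obtain a \<alpha> where "f q = affine_form n a \<alpha>" by blast
  with insert show ?case
    using monomial_span_mult_affine_form[OF insert.IH, of a \<alpha>] by (simp add: mult.assoc)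
qed simp

lemma affine_form_of_real:
  "affine_form n a \<alpha> (complex_of_real \<circ> r) = complex_of_real (a + (\<Sum>j=1..n. \<alpha> j * r j))"
  by (simp add: affine_form_def)

lemma affine_form_imaginary:
  "affine_form n a \<alpha> (\<lambda>\<mu>. \<i> * complex_of_real (b \<mu>))
    = complex_of_real a + \<i> * complex_of_real (\<Sum>j=1..n. \<alpha> j * b j)"
  by (simp add: affine_form_def sum_distrib_left mult_ac)

lemma separating_affine_form:
  assumes "p \<noteq> q" "\<forall>\<mu>. \<mu> \<notin> {1..n} \<longrightarrow> p \<mu> = q \<mu>"
  shows "\<exists>a \<alpha>. affine_form n a \<alpha> (complex_of_real \<circ> p) = 1 \<and> affine_form n a \<alpha> (complex_of_real \<circ> q) = 0"
proof -
  obtain j where j: "p j \<noteq> q j" using assms(1) by (meson ext)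
  with assms(2) have "j \<in> {1..n}" by blast
  define \<alpha> where "\<alpha> = (\<lambda>i. if i = j then 1 / (p j - q j) else 0)"
  have "(\<Sum>i=1..n. \<alpha> i * r i) = r j / (p j - q j)" for r
    using \<open>j \<in> {1..n}\<close> by (simp add: \<alpha>_def if_distrib if_distribR cong: if_cong)
  then have "affine_form n (- q j / (p j - q j)) \<alpha> (complex_of_real \<circ> r)
      = complex_of_real ((r j - q j) / (p j - q j))" for r
    by (simp only: affine_form_of_real diff_divide_distrib) simp
  with j show ?thesis by (metis diff_self div_0 divide_self_if right_minus_eq of_real_0 of_real_1)
qed

definition real_solutions :: "nat \<Rightarrow> (nat \<Rightarrow> real) \<Rightarrow> (nat \<Rightarrow> real) \<Rightarrow> (nat \<Rightarrow> real) set" where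
  "real_solutions n k b = {p. (\<forall>\<mu>. \<mu> \<notin> {1..n} \<longrightarrow> p \<mu> = 0) \<and>
     (\<forall>\<mu>\<in>{1..n}. (p \<mu>)\<^sup>2 + (b \<mu>)\<^sup>2 = (\<Sum>\<nu>=1..n. k \<nu> * p \<nu>))}"

lemma real_solution_in_variety:
  "p \<in> real_solutions n k b \<Longrightarrow> complex_of_real \<circ> p \<in> quadric_variety n k b"
  unfolding real_solutions_def quadric_variety_def
  by (auto simp flip: of_real_power of_real_add of_real_mult of_real_sum)

lemma imaginary_point_in_variety:
  "(\<Sum>\<nu>=1..n. k \<nu> * b \<nu>) = 0 \<Longrightarrow> (\<lambda>\<mu>. \<i> * complex_of_real (b \<mu>)) \<in> quadric_variety n k b"
  unfolding quadric_variety_def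
  by (simp add: power_mult_distrib mult.left_commute flip: sum_distrib_left of_real_sum of_real_mult)

lemma real_solution_linear_form_pos:
  assumes "p \<in> real_solutions n k b" "\<mu> \<in> {1..n}" "b \<mu> \<noteq> 0"
  shows "(\<Sum>\<nu>=1..n. k \<nu> * p \<nu>) > 0"
proof -
  have "(\<Sum>\<nu>=1..n. k \<nu> * p \<nu>) = (p \<mu>)\<^sup>2 + (b \<mu>)\<^sup>2"
    using assms(1,2) unfolding real_solutions_def by auto
  then show ?thesis using assms(3) by (simp add: add_nonneg_pos)
qed

definition real_evaluation ::
    "(nat \<Rightarrow> real) \<Rightarrow> ((nat \<Rightarrow> complex) \<Rightarrow> complex) \<Rightarrow> (nat \<Rightarrow> real) + bool \<Rightarrow> real" where
  "real_evaluation b g x = (case x of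
      Inl p \<Rightarrow> Re (g (complex_of_real \<circ> p))
    | Inr t \<Rightarrow> (if t then Re else Im) (g (\<lambda>\<mu>. \<i> * complex_of_real (b \<mu>))))"

context
  fixes n :: nat and k b :: "nat \<Rightarrow> real" and F :: "(nat \<Rightarrow> real) set" and j :: nat
  assumes finite_F: "finite F" and F_solutions: "F \<subseteq> real_solutions n k b"
    and orthogonal: "(\<Sum>\<nu>=1..n. k \<nu> * b \<nu>) = 0"
    and j: "j \<in> {1..n}" "b j \<noteq> 0"
begin

lemma affine_form_weights_at_imaginary_point:
  "affine_form n a (\<lambda>i. c * k i) (\<lambda>\<mu>. \<i> * complex_of_real (b \<mu>)) = complex_of_real a"
  using orthogonal by (simp add: affine_form_imaginary mult.assoc flip: sum_distrib_left)

lemma interpolant_at_real_solution: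
  assumes "p \<in> F"
  shows "\<exists>g\<in>monomial_span n k b. (\<forall>r\<in>F. g (complex_of_real \<circ> r) = (if r = p then 1 else 0)) \<and>
    g (\<lambda>\<mu>. \<i> * complex_of_real (b \<mu>)) = 0"
proof -
  have "\<forall>q\<in>F - {p}. \<exists>f. (\<exists>a \<alpha>. f = affine_form n a \<alpha>) \<and>
      f (complex_of_real \<circ> p) = 1 \<and> f (complex_of_real \<circ> q) = 0"
  proof
    fix q assume "q \<in> F - {p}"
    with assms F_solutions have "p \<in> real_solutions n k b" "q \<in> real_solutions n k b" "p \<noteq> q"
      by auto
    then have "p \<noteq> q" "\<forall>\<mu>. \<mu> \<notin> {1..n} \<longrightarrow> p \<mu> = q \<mu>"
      unfolding real_solutions_def by auto
    with separating_affine_form show "\<exists>f. (\<exists>a \<alpha>. f = affine_form n a \<alpha>) \<and>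
        f (complex_of_real \<circ> p) = 1 \<and> f (complex_of_real \<circ> q) = 0"
      by blast
  qed
  then obtain f where f: "\<forall>q\<in>F - {p}. (\<exists>a \<alpha>. f q = affine_form n a \<alpha>) \<and>
      f q (complex_of_real \<circ> p) = 1 \<and> f q (complex_of_real \<circ> q) = 0"
    by (rule bchoice[elim_format]) blast
  define L where "L = (\<Sum>\<nu>=1..n. k \<nu> * p \<nu>)"
  have "L > 0"
    using real_solution_linear_form_pos assms F_solutions j unfolding L_def by blast
  define g where "g = (\<lambda>z. (\<Prod>q\<in>F - {p}. f q z) * affine_form n 0 (\<lambda>i. (1 / L) * k i) z)"
  have "g \<in> monomial_span n k b"
    unfolding g_def using finite_F f
    by (intro monomial_span_mult_prod_affine_forms affine_form_in_monomial_span) auto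
  moreover have "g (complex_of_real \<circ> p) = 1"
  proof -
    have "0 + (\<Sum>i=1..n. (1 / L) * k i * p i) = 1"
      using \<open>L > 0\<close> by (simp add: L_def flip: sum_divide_distrib)
    then have "affine_form n 0 (\<lambda>i. (1 / L) * k i) (complex_of_real \<circ> p) = 1"
      by (simp only: affine_form_of_real of_real_1)
    moreover have "(\<Prod>q\<in>F - {p}. f q (complex_of_real \<circ> p)) = 1"
      using f by (intro prod.neutral) blast
    ultimately show ?thesis by (simp add: g_def)
  qed
  moreover have "g (complex_of_real \<circ> r) = 0" if "r \<in> F - {p}" for r
  proof -
    have "(\<Prod>q\<in>F - {p}. f q (complex_of_real \<circ> r)) = 0"
      using f that finite_F by (subst prod_zero_iff) auto
    then show ?thesis by (simp add: g_def)
  qed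
  moreover have "g (\<lambda>\<mu>. \<i> * complex_of_real (b \<mu>)) = 0"
    by (simp only: g_def affine_form_weights_at_imaginary_point of_real_0 mult_zero_right)
  ultimately show ?thesis by (intro bexI[of _ g]) auto
qed

lemma interpolant_at_imaginary_point:
  "\<exists>g\<in>monomial_span n k b. (\<forall>r\<in>F. g (complex_of_real \<circ> r) = 0) \<and>
    g (\<lambda>\<mu>. \<i> * complex_of_real (b \<mu>)) = c"
proof -
  let ?w = "\<lambda>\<mu>. \<i> * complex_of_real (b \<mu>)"
  define vanish where "vanish = (\<lambda>z. \<Prod>p\<in>F. affine_form n 1 (\<lambda>i. (- 1 / (\<Sum>\<nu>=1..n. k \<nu> * p \<nu>)) * k i) z)"
  define lift where "lift = affine_form n (Re c) (\<lambda>i. if i = j then Im c / b j else 0)"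
  have "(\<lambda>z. vanish z * lift z) \<in> monomial_span n k b"
    unfolding vanish_def lift_def using finite_F
    by (intro monomial_span_mult_prod_affine_forms affine_form_in_monomial_span) auto
  moreover have "vanish (complex_of_real \<circ> r) = 0" if "r \<in> F" for r
  proof -
    have "(\<Sum>\<nu>=1..n. k \<nu> * r \<nu>) > 0"
      using real_solution_linear_form_pos that F_solutions j by blast
    then have "1 + (\<Sum>i=1..n. (- 1 / (\<Sum>\<nu>=1..n. k \<nu> * r \<nu>)) * k i * r i) = 0"
      by (simp add: sum_negf flip: sum_divide_distrib)
    then have "affine_form n 1 (\<lambda>i. (- 1 / (\<Sum>\<nu>=1..n. k \<nu> * r \<nu>)) * k i) (complex_of_real \<circ> r) = 0"
      by (simp only: affine_form_of_real of_real_0)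
    then show ?thesis unfolding vanish_def using finite_F that by (meson prod_zero_iff)
  qed
  moreover have "vanish ?w = 1"
    by (simp only: vanish_def affine_form_weights_at_imaginary_point of_real_1 prod.neutral_const)
  moreover have "lift ?w = c"
    using j by (simp add: lift_def affine_form_imaginary if_distrib if_distribR complex_eq_iff cong: if_cong)
  ultimately show ?thesis by (intro bexI[of _ "\<lambda>z. vanish z * lift z"]) auto
qed

lemma indicator_interpolant:
  assumes "x \<in> Inl ` F \<union> range Inr"
  shows "\<exists>g\<in>monomial_span n k b. \<forall>x'\<in>Inl ` F \<union> range Inr.
    real_evaluation b g x' = (if x' = x then 1 else 0)"
proof (cases x)
  case (Inl p)
  with assms have "p \<in> F" by auto
  from interpolant_at_real_solution[OF this] obtain g where "g \<in> monomial_span n k b"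
    and "\<forall>r\<in>F. g (complex_of_real \<circ> r) = (if r = p then 1 else 0)"
    and "g (\<lambda>\<mu>. \<i> * complex_of_real (b \<mu>)) = 0"
    by blast
  with Inl show ?thesis by (intro bexI[of _ g]) (auto simp: real_evaluation_def split: if_splits)
next
  case (Inr t)
  from interpolant_at_imaginary_point[of "if t then 1 else \<i>"] obtain g
    where "g \<in> monomial_span n k b" "\<forall>r\<in>F. g (complex_of_real \<circ> r) = 0"
      and "g (\<lambda>\<mu>. \<i> * complex_of_real (b \<mu>)) = (if t then 1 else \<i>)"
    by blast
  with Inr show ?thesis by (intro bexI[of _ g]) (auto simp: real_evaluation_def split: if_splits)
qed

lemma card_subset_real_solutions: "card F + 2 \<le> 2 ^ n"
proof -
  define D :: "((nat \<Rightarrow> real) + bool) set" where "D = Inl ` F \<union> range Inr"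
  have linear: "real_evaluation b g x = (\<Sum>S\<in>Pow {1..n}. c S * real_evaluation b (\<lambda>z. prod z S) x)"
    if "x \<in> D" "\<forall>z\<in>quadric_variety n k b. g z = (\<Sum>S\<in>Pow {1..n}. complex_of_real (c S) * prod z S)"
    for g c x
    using that imaginary_point_in_variety[OF orthogonal] real_solution_in_variety F_solutions
    by (auto simp: D_def real_evaluation_def Re_sum Im_sum)
  have "card D \<le> card (Pow {1..n})"
  proof (rule card_le_if_indicators_in_span[where W = "\<lambda>S. real_evaluation b (\<lambda>z. prod z S)"])
    show "\<forall>x\<in>D. \<exists>c. \<forall>x'\<in>D.
        (\<Sum>S\<in>Pow {1..n}. c S * real_evaluation b (\<lambda>z. prod z S) x') = (if x' = x then 1 else 0)"
    proof
      fix x assume "x \<in> D"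
      with indicator_interpolant obtain g where "g \<in> monomial_span n k b"
        and indicator: "\<forall>x'\<in>D. real_evaluation b g x' = (if x' = x then 1 else 0)"
        unfolding D_def by blast
      then obtain c where c: "\<forall>z\<in>quadric_variety n k b.
          g z = (\<Sum>S\<in>Pow {1..n}. complex_of_real (c S) * prod z S)"
        unfolding monomial_span_def by blast
      have "(\<Sum>S\<in>Pow {1..n}. c S * real_evaluation b (\<lambda>z. prod z S) x') = (if x' = x then 1 else 0)"
        if "x' \<in> D" for x'
        using linear[OF that c] indicator that by simp
      then show "\<exists>c. \<forall>x'\<in>D.
          (\<Sum>S\<in>Pow {1..n}. c S * real_evaluation b (\<lambda>z. prod z S) x') = (if x' = x then 1 else 0)"
        by blast
    qed
  qed (use finite_F in \<open>simp_all add: D_def\<close>)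
  moreover have "card D = card F + 2"
  proof -
    have "card (range Inr :: ((nat \<Rightarrow> real) + bool) set) = 2"
      by (simp add: card_image)
    moreover have "card (Inl ` F :: ((nat \<Rightarrow> real) + bool) set) = card F"
      by (simp add: card_image)
    ultimately show ?thesis
      unfolding D_def using finite_F by (subst card_Un_disjoint) auto
  qed
  ultimately show ?thesis by (simp add: card_Pow)
qed

end

lemma finite_card_real_solutions:
  assumes "(\<Sum>\<nu>=1..n. k \<nu> * b \<nu>) = 0" "j \<in> {1..n}" "b j \<noteq> 0"
  shows "finite (real_solutions n k b) \<and> card (real_solutions n k b) + 2 \<le> 2 ^ n"
proof -
  have bound: "card F + 2 \<le> 2 ^ n" if "finite F" "F \<subseteq> real_solutions n k b" for F
    using card_subset_real_solutions that assms .
  have "finite (real_solutions n k b)"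
  proof (rule ccontr)
    assume "infinite (real_solutions n k b)"
    then obtain F where "F \<subseteq> real_solutions n k b" "finite F" "card F = 2 ^ n"
      using infinite_arbitrarily_large by blast
    then show False using bound by fastforce
  qed
  with bound show ?thesis by blast
qed

lemma equilibrium_order_parameter:
  assumes "\<theta> \<in> equilibria n \<omega> k"
  shows "(\<Sum>\<mu>=1..n. k \<mu> * cos (\<theta> \<mu>)) \<ge> 0" "(\<Sum>\<mu>=1..n. k \<mu> * sin (\<theta> \<mu>)) = 0"
proof -
  obtain r where "r \<ge> 0"
    and "(\<Sum>\<mu>=1..n. complex_of_real (k \<mu>) * cis (\<theta> \<mu>)) = complex_of_real r"
    using assms unfolding equilibria_def by (auto simp: cis_conv_exp)
  from arg_cong[OF this(2), of Re] arg_cong[OF this(2), of Im] \<open>r \<ge> 0\<close>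
  show "(\<Sum>\<mu>=1..n. k \<mu> * cos (\<theta> \<mu>)) \<ge> 0" "(\<Sum>\<mu>=1..n. k \<mu> * sin (\<theta> \<mu>)) = 0"
    by (simp_all add: Re_sum Im_sum)
qed

lemma equilibrium_sin_eq:
  assumes "\<theta> \<in> equilibria n \<omega> k" "\<nu> \<in> {1..n}" "k \<nu> \<noteq> 0"
  shows "real n * \<omega> \<nu> / k \<nu> = (\<Sum>\<mu>=1..n. k \<mu> * cos (\<theta> \<mu>)) * sin (\<theta> \<nu>)"
proof -
  have "\<omega> \<nu> = (1 / real n) * (\<Sum>\<mu>=1..n. k \<nu> * k \<mu> * sin (\<theta> \<nu> - \<theta> \<mu>))"
    using assms(1,2) unfolding equilibria_def by blast
  also have "\<dots> = (1 / real n) * k \<nu> * (sin (\<theta> \<nu>) * (\<Sum>\<mu>=1..n. k \<mu> * cos (\<theta> \<mu>))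
                    - cos (\<theta> \<nu>) * (\<Sum>\<mu>=1..n. k \<mu> * sin (\<theta> \<mu>)))"
    by (simp add: sin_diff sum_distrib_left sum_subtractf algebra_simps)
  finally show ?thesis
    using equilibrium_order_parameter(2)[OF assms(1)] assms(2,3) by (simp add: field_simps)
qed

definition scaled_cosines :: "nat \<Rightarrow> (nat \<Rightarrow> real) \<Rightarrow> (nat \<Rightarrow> real) \<Rightarrow> nat \<Rightarrow> real" where
  "scaled_cosines n k \<theta> \<mu> =
     (if \<mu> \<in> {1..n} then (\<Sum>\<nu>=1..n. k \<nu> * cos (\<theta> \<nu>)) * cos (\<theta> \<mu>) else 0)"

lemma linear_form_scaled_cosines:
  "(\<Sum>\<nu>=1..n. k \<nu> * scaled_cosines n k \<theta> \<nu>) = (\<Sum>\<nu>=1..n. k \<nu> * cos (\<theta> \<nu>))\<^sup>2"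
  by (simp add: scaled_cosines_def power2_eq_square sum_distrib_left sum_distrib_right mult_ac)

lemma scaled_cosines_in_real_solutions:
  assumes "\<theta> \<in> equilibria n \<omega> k" "\<forall>\<mu>\<in>{1..n}. k \<mu> \<noteq> 0"
  shows "scaled_cosines n k \<theta> \<in> real_solutions n k (\<lambda>\<mu>. real n * \<omega> \<mu> / k \<mu>)"
  unfolding real_solutions_def
proof (intro CollectI conjI allI impI ballI)
  fix \<mu> :: nat assume "\<mu> \<in> {1..n}"
  let ?R = "\<Sum>\<nu>=1..n. k \<nu> * cos (\<theta> \<nu>)"
  have "(scaled_cosines n k \<theta> \<mu>)\<^sup>2 + (real n * \<omega> \<mu> / k \<mu>)\<^sup>2 = ?R\<^sup>2"
    using \<open>\<mu> \<in> {1..n}\<close> equilibrium_sin_eq[OF assms(1) \<open>\<mu> \<in> {1..n}\<close>] assms(2)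
    by (simp add: scaled_cosines_def power_mult_distrib flip: distrib_left)
  then show "(scaled_cosines n k \<theta> \<mu>)\<^sup>2 + (real n * \<omega> \<mu> / k \<mu>)\<^sup>2
      = (\<Sum>\<nu>=1..n. k \<nu> * scaled_cosines n k \<theta> \<nu>)"
    by (metis linear_form_scaled_cosines)
qed (auto simp: scaled_cosines_def)

lemma angle_eq_if_cos_sin_eq:
  assumes "-pi < a" "a \<le> pi" "-pi < c" "c \<le> pi" "cos a = cos c" "sin a = sin c"
  shows "a = c"
proof -
  have "cis a = cis c" using assms by (simp add: complex_eq_iff)
  then have "Arg (cis a) = Arg (cis c)" by simp
  then show ?thesis using assms by (simp add: Arg_cis)
qed

lemma inj_on_scaled_cosines:
  assumes "\<forall>\<mu>\<in>{1..n}. k \<mu> \<noteq> 0" "\<mu>\<^sub>0 \<in> {1..n}" "\<omega> \<mu>\<^sub>0 \<noteq> 0"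
  shows "inj_on (scaled_cosines n k) (equilibria n \<omega> k)"
proof (rule inj_onI)
  fix \<theta> \<theta>' assume \<theta>: "\<theta> \<in> equilibria n \<omega> k" and \<theta>': "\<theta>' \<in> equilibria n \<omega> k"
    and eq: "scaled_cosines n k \<theta> = scaled_cosines n k \<theta>'"
  define R where "R = (\<lambda>\<theta>. \<Sum>\<nu>=1..n. k \<nu> * cos (\<theta> \<nu>))"
  have "(R \<theta>)\<^sup>2 = (R \<theta>')\<^sup>2"
    unfolding R_def by (metis linear_form_scaled_cosines eq)
  then have "R \<theta> = R \<theta>'"
    using equilibrium_order_parameter(1)[OF \<theta>] equilibrium_order_parameter(1)[OF \<theta>']
    by (simp add: R_def power2_eq_iff_nonneg)
  have "R \<theta> \<noteq> 0"
    using equilibrium_sin_eq[OF \<theta> assms(2)] assms by (auto simp: R_def)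
  show "\<theta> = \<theta>'"
  proof
    fix \<mu>
    show "\<theta> \<mu> = \<theta>' \<mu>"
    proof (cases "\<mu> \<in> {1..n}")
      case True
      have "R \<theta> * cos (\<theta> \<mu>) = R \<theta> * cos (\<theta>' \<mu>)"
        using fun_cong[OF eq, of \<mu>] True \<open>R \<theta> = R \<theta>'\<close> by (simp add: scaled_cosines_def R_def)
      moreover have "R \<theta> * sin (\<theta> \<mu>) = R \<theta> * sin (\<theta>' \<mu>)"
        using equilibrium_sin_eq[OF \<theta> True] equilibrium_sin_eq[OF \<theta>' True] True assms(1)
          \<open>R \<theta> = R \<theta>'\<close> unfolding R_def by metis
      moreover have "-pi < \<theta> \<mu>" "\<theta> \<mu> \<le> pi" "-pi < \<theta>' \<mu>" "\<theta>' \<mu> \<le> pi"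
        using \<theta> \<theta>' True unfolding equilibria_def by auto
      ultimately show ?thesis
        using \<open>R \<theta> \<noteq> 0\<close> angle_eq_if_cos_sin_eq by simp
    next
      case False
      then show ?thesis using \<theta> \<theta>' unfolding equilibria_def by auto
    qed
  qed
qed

theorem theorem3:
  fixes n :: nat and \<omega> k :: "nat \<Rightarrow> real"
  assumes "n \<ge> 2"
    and "\<forall>\<mu>\<in>{1..n}. k \<mu> > 0"
    and IC1: "(\<Sum>\<mu>=1..n. \<omega> \<mu>) = 0"
    and IC2: "\<exists>\<mu>\<in>{1..n}. \<omega> \<mu> \<noteq> 0"
    and IC3: "\<forall>\<mu>\<in>{1..<n}. \<bar>\<omega> \<mu> / k \<mu>\<bar> \<le> \<bar>\<omega> (\<mu>+1) / k (\<mu>+1)\<bar>"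
  shows "finite (equilibria n \<omega> k) \<and> card (equilibria n \<omega> k) \<le> 2 ^ n - 2"
proof -
  have k: "\<forall>\<mu>\<in>{1..n}. k \<mu> \<noteq> 0" using assms(2) by auto
  obtain \<mu>\<^sub>0 where \<mu>\<^sub>0: "\<mu>\<^sub>0 \<in> {1..n}" "\<omega> \<mu>\<^sub>0 \<noteq> 0" using IC2 by blast
  define b where "b = (\<lambda>\<mu>. real n * \<omega> \<mu> / k \<mu>)"
  have "(\<Sum>\<nu>=1..n. k \<nu> * b \<nu>) = real n * (\<Sum>\<nu>=1..n. \<omega> \<nu>)"
    using k by (simp add: b_def sum_distrib_left)
  with IC1 have "(\<Sum>\<nu>=1..n. k \<nu> * b \<nu>) = 0" by simp
  moreover have "b \<mu>\<^sub>0 \<noteq> 0" using \<mu>\<^sub>0 k by (auto simp: b_def)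
  ultimately have "finite (real_solutions n k b) \<and> card (real_solutions n k b) + 2 \<le> 2 ^ n"
    using finite_card_real_solutions \<mu>\<^sub>0(1) by blast
  moreover have "scaled_cosines n k ` equilibria n \<omega> k \<subseteq> real_solutions n k b"
    using scaled_cosines_in_real_solutions k unfolding b_def by blast
  moreover have "inj_on (scaled_cosines n k) (equilibria n \<omega> k)"
    using inj_on_scaled_cosines k \<mu>\<^sub>0 by blast
  ultimately show ?thesis
    by (metis add_le_imp_le_diff card_image card_mono finite_imageD finite_subset le_trans)
qed

end
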